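(* Let $R$ be a ring and $a\in R$. Then $a$ is feckly clean if and only if there exists $e\in R$ such that $$W(a-1)\subseteq W(e)\subseteq J\text{-spec}(R)\setminus W(a)\quad\text{and}\quad eR(1-e)\subseteq J(R).$$
   Context: Rings are associative with identity, not necessarily commutative; $J(R)$ is the Jacobson radical. An element $u\in R$ is full if $RuR=R$. An element $a\in R$ is feckly clean if there exist $e\in R$ and a full element $u\in R$ with $a=e+u$ and $eR(1-e)\subseteq J(R)$. $J\text{-spec}(R)$ is the set of all prime (two-sided) ideals $P$ of $R$ with $J(R)\subseteq P$. For an ideal $I$, $W(I)=\{P\in J\text{-spec}(R): I\subseteq P\}$, and for $a\in R$, $W(a)=W(RaR)$. *)

theory Defs
  imports Main
begin

definition left_ideal :: "'a::ring_1 set \<Rightarrow> bool" where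
  "left_ideal I \<longleftrightarrow> 0 \<in> I \<and> (\<forall>x\<in>I. \<forall>y\<in>I. x + y \<in> I) \<and> (\<forall>r. \<forall>x\<in>I. r * x \<in> I)"

definition two_sided_ideal :: "'a::ring_1 set \<Rightarrow> bool" where
  "two_sided_ideal I \<longleftrightarrow> left_ideal I \<and> (\<forall>r. \<forall>x\<in>I. x * r \<in> I)"

definition maximal_left_ideal :: "'a::ring_1 set \<Rightarrow> bool" where
  "maximal_left_ideal I \<longleftrightarrow> left_ideal I \<and> I \<noteq> UNIV \<and>
     (\<forall>L. left_ideal L \<and> I \<subseteq> L \<longrightarrow> L = I \<or> L = UNIV)"

definition jacobson :: "'a::ring_1 set" where
  "jacobson = \<Inter> {I. maximal_left_ideal I}"

text \<open>Two-sided ideal generated by a set; RuR is ideal_gen {u}.\<close>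
definition ideal_gen :: "'a::ring_1 set \<Rightarrow> 'a set" where
  "ideal_gen S = \<Inter> {I. two_sided_ideal I \<and> S \<subseteq> I}"

definition full :: "'a::ring_1 \<Rightarrow> bool" where
  "full u \<longleftrightarrow> ideal_gen {u} = UNIV"

definition feckly_clean :: "'a::ring_1 \<Rightarrow> bool" where
  "feckly_clean a \<longleftrightarrow> (\<exists>e u. full u \<and> a = e + u \<and> (\<forall>r. e * r * (1 - e) \<in> jacobson))"

definition prime_ideal :: "'a::ring_1 set \<Rightarrow> bool" where
  "prime_ideal P \<longleftrightarrow> two_sided_ideal P \<and> P \<noteq> UNIV \<and>
     (\<forall>A B. two_sided_ideal A \<and> two_sided_ideal B \<and> (\<forall>a\<in>A. \<forall>b\<in>B. a * b \<in> P)
        \<longrightarrow> A \<subseteq> P \<or> B \<subseteq> P)"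

definition J_spec :: "'a::ring_1 set set" where
  "J_spec = {P. prime_ideal P \<and> jacobson \<subseteq> P}"

definition W :: "'a::ring_1 set \<Rightarrow> 'a set set" where
  "W I = {P \<in> J_spec. I \<subseteq> P}"

definition W_elem :: "'a::ring_1 \<Rightarrow> 'a set set" where
  "W_elem a = W (ideal_gen {a})"

end

theory Submission
  imports Defs
begin

(* Writing u = a - e, the element a is feckly clean iff some e with
   eR(1-e) \<subseteq> J(R) makes a - e full.  Two facts turn this into the W-condition:
   (1) An element u is full iff it lies in no J-prime ideal.  The nontrivial direction
       needs that every proper two-sided ideal I lies in some J-prime: by Zorn, I lies in
       a maximal left ideal L, and the core {x. xR \<subseteq> L} of L (a primitive ideal)
       is a prime ideal containing both I and J(R).
   (2) If eR(1-e) \<subseteq> J(R) then every J-prime P contains e or 1 - e, because a prime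
       ideal containing eRf contains e or f.  Consequently a - e \<notin> P iff
       (a - 1 \<in> P \<longrightarrow> e \<in> P) and (e \<in> P \<longrightarrow> a \<notin> P),
       which is the pointwise form of W(a-1) \<subseteq> W(e) \<subseteq> J-spec(R) - W(a). *)

lemma left_idealI:
  assumes "0 \<in> I" "\<And>x y. x \<in> I \<Longrightarrow> y \<in> I \<Longrightarrow> x + y \<in> I" "\<And>r x. x \<in> I \<Longrightarrow> r * x \<in> I"
  shows "left_ideal I"
  using assms unfolding left_ideal_def by blast

lemma left_ideal_zero: "left_ideal I \<Longrightarrow> 0 \<in> I"
  unfolding left_ideal_def by simp

lemma left_ideal_add: "left_ideal I \<Longrightarrow> x \<in> I \<Longrightarrow> y \<in> I \<Longrightarrow> x + y \<in> I"
  unfolding left_ideal_def by simp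

lemma left_ideal_mult: "left_ideal I \<Longrightarrow> x \<in> I \<Longrightarrow> r * x \<in> I"
  unfolding left_ideal_def by simp

lemma left_ideal_diff:
  assumes I: "left_ideal I" and "x \<in> I" "y \<in> I"
  shows "x - y \<in> I"
proof -
  have "x + (- 1) * y \<in> I" using assms left_ideal_add left_ideal_mult by blast
  then show ?thesis by simp
qed

lemma left_ideal_one_UNIV: "left_ideal I \<Longrightarrow> 1 \<in> I \<Longrightarrow> I = UNIV"
  by (metis UNIV_eq_I left_ideal_mult mult.right_neutral)

lemma two_sided_idealI: "left_ideal I \<Longrightarrow> (\<And>r x. x \<in> I \<Longrightarrow> x * r \<in> I) \<Longrightarrow> two_sided_ideal I"
  unfolding two_sided_ideal_def by simp

lemma two_sided_ideal_left: "two_sided_ideal I \<Longrightarrow> left_ideal I"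
  unfolding two_sided_ideal_def by simp

lemma two_sided_ideal_right: "two_sided_ideal I \<Longrightarrow> x \<in> I \<Longrightarrow> x * r \<in> I"
  unfolding two_sided_ideal_def by simp

lemma ideal_gen_two_sided: "two_sided_ideal (ideal_gen S)"
  unfolding ideal_gen_def two_sided_ideal_def left_ideal_def by blast

lemma ideal_gen_least: "two_sided_ideal P \<Longrightarrow> S \<subseteq> P \<Longrightarrow> ideal_gen S \<subseteq> P"
  unfolding ideal_gen_def by blast

lemma ideal_gen_in: "x \<in> ideal_gen {x}"
  unfolding ideal_gen_def by blast

text \<open>For left ideals K, L and an element r, the set Kr + L is again a left ideal.
  It is the tool for showing that a left ideal strictly above a maximal one is R.\<close>
lemma left_ideal_mult_plus:
  assumes K: "left_ideal K" and L: "left_ideal L"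
  shows "left_ideal {k * r + l |k l. k \<in> K \<and> l \<in> L}"
proof (rule left_idealI)
  have "0 = 0 * r + 0" by simp
  then show "0 \<in> {k * r + l |k l. k \<in> K \<and> l \<in> L}"
    using left_ideal_zero[OF K] left_ideal_zero[OF L] by blast
next
  fix x y assume "x \<in> {k * r + l |k l. k \<in> K \<and> l \<in> L}" "y \<in> {k * r + l |k l. k \<in> K \<and> l \<in> L}"
  then obtain k1 l1 k2 l2 where "x = k1 * r + l1" "y = k2 * r + l2" "k1 \<in> K" "k2 \<in> K" "l1 \<in> L" "l2 \<in> L"
    by blast
  moreover have "k1 * r + l1 + (k2 * r + l2) = (k1 + k2) * r + (l1 + l2)"
    by (simp add: algebra_simps)
  ultimately show "x + y \<in> {k * r + l |k l. k \<in> K \<and> l \<in> L}"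
    using left_ideal_add[OF K] left_ideal_add[OF L] by blast
next
  fix t x assume "x \<in> {k * r + l |k l. k \<in> K \<and> l \<in> L}"
  then obtain k l where "x = k * r + l" "k \<in> K" "l \<in> L" by blast
  moreover have "t * (k * r + l) = (t * k) * r + t * l" by (simp add: algebra_simps)
  ultimately show "t * x \<in> {k * r + l |k l. k \<in> K \<and> l \<in> L}"
    using left_ideal_mult[OF K] left_ideal_mult[OF L] by blast
qed

lemma left_ideal_colon: "left_ideal L \<Longrightarrow> left_ideal {y. y * r \<in> L}"
  by (rule left_idealI) (auto simp: left_ideal_zero left_ideal_add left_ideal_mult
      distrib_right mult.assoc)

lemma maximal_left_idealD:
  assumes "maximal_left_ideal L"
  shows "left_ideal L" and "1 \<notin> L"
  using assms left_ideal_one_UNIV unfolding maximal_left_ideal_def by blast+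

lemma maximal_left_ideal_above:
  assumes "maximal_left_ideal L" "left_ideal M" "L \<subseteq> M" "x \<in> M" "x \<notin> L"
  shows "M = UNIV"
  using assms unfolding maximal_left_ideal_def by blast

lemma maximal_left_ideal_span:
  assumes L: "maximal_left_ideal L" and y: "y \<notin> L"
  shows "\<exists>s l. l \<in> L \<and> z = s * y + l"
proof -
  let ?M = "{s * y + l |s l. s \<in> UNIV \<and> l \<in> L}"
  have li: "left_ideal ?M"
    using left_ideal_mult_plus[of UNIV] maximal_left_idealD(1)[OF L]
    by (simp add: left_ideal_def)
  have "l = 0 * y + l" "y = 1 * y + 0" for l by simp_all
  then have "L \<subseteq> ?M" "y \<in> ?M" using left_ideal_zero[OF maximal_left_idealD(1)[OF L]] by blast+
  then have "?M = UNIV" using maximal_left_ideal_above[OF L li] y by blast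
  then show ?thesis by blast
qed

text \<open>The colon (L : r) of a maximal left ideal by an element r \<notin> L is again maximal
  (it is the annihilator of the nonzero element r + L of the simple module R/L).\<close>
lemma maximal_left_ideal_colon:
  assumes L: "maximal_left_ideal L" and r: "r \<notin> L"
  shows "maximal_left_ideal {y. y * r \<in> L}"
proof -
  let ?C = "{y. y * r \<in> L}"
  have li: "left_ideal L" using maximal_left_idealD[OF L] by blast
  have "K = UNIV" if K: "left_ideal K" "?C \<subseteq> K" "K \<noteq> ?C" for K
  proof -
    obtain k0 where k0: "k0 \<in> K" "k0 * r \<notin> L" using K by blast
    let ?M = "{k * r + l |k l. k \<in> K \<and> l \<in> L}"
    have "l = 0 * r + l" "k0 * r = k0 * r + 0" for l by simp_all
    then have "L \<subseteq> ?M" "k0 * r \<in> ?M"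
      using left_ideal_zero[OF li] left_ideal_zero[OF K(1)] k0 by blast+
    then have M: "?M = UNIV"
      using maximal_left_ideal_above[OF L left_ideal_mult_plus[OF K(1) li]] k0 by blast
    have "y \<in> K" for y
    proof -
      obtain k l where kl: "y * r = k * r + l" "k \<in> K" "l \<in> L" using M by blast
      then have "(y - k) * r \<in> L" by (simp add: algebra_simps)
      then have "y - k \<in> K" using K(2) by blast
      then have "(y - k) + k \<in> K" using kl(2) left_ideal_add[OF K(1)] by blast
      then show ?thesis by simp
    qed
    then show ?thesis by blast
  qed
  moreover have "1 \<notin> ?C" using r by simp
  ultimately show ?thesis
    using left_ideal_colon[OF li] unfolding maximal_left_ideal_def by blast
qed

text \<open>The Jacobson radical is closed under right multiplication: x \<in> J(R) gives xr \<in> L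
  for every maximal left ideal L, because (L : r) is maximal whenever r \<notin> L.\<close>
lemma jacobson_mult_right:
  assumes L: "maximal_left_ideal L" and x: "x \<in> jacobson"
  shows "x * r \<in> L"
proof (cases "r \<in> L")
  case True
  then show ?thesis using left_ideal_mult[OF maximal_left_idealD(1)[OF L]] by blast
next
  case False
  then show ?thesis using maximal_left_ideal_colon[OF L] x unfolding jacobson_def by blast
qed

lemma left_ideal_Union_chain:
  assumes ne: "C \<noteq> {}" and ideals: "\<And>X. X \<in> C \<Longrightarrow> left_ideal X"
    and chain: "\<And>X Y. X \<in> C \<Longrightarrow> Y \<in> C \<Longrightarrow> X \<subseteq> Y \<or> Y \<subseteq> X"
  shows "left_ideal (\<Union>C)"
proof (rule left_idealI)
  show "0 \<in> \<Union>C" using ne ideals left_ideal_zero by blast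
next
  fix x y assume "x \<in> \<Union>C" "y \<in> \<Union>C"
  then obtain X Y where XY: "X \<in> C" "Y \<in> C" "x \<in> X" "y \<in> Y" by blast
  then have "x + y \<in> X \<or> x + y \<in> Y"
    using chain[OF XY(1,2)] ideals left_ideal_add by blast
  then show "x + y \<in> \<Union>C" using XY by blast
next
  fix r x assume "x \<in> \<Union>C"
  then show "r * x \<in> \<Union>C" using ideals left_ideal_mult by blast
qed

lemma exists_maximal_left_ideal:
  assumes I: "left_ideal I" "1 \<notin> I"
  shows "\<exists>L. maximal_left_ideal L \<and> I \<subseteq> L"
proof -
  define A where "A = {L. left_ideal L \<and> I \<subseteq> L \<and> 1 \<notin> L}"
  have "\<exists>M\<in>A. \<forall>X\<in>A. M \<subseteq> X \<longrightarrow> X = M"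
  proof (rule subset_Zorn_nonempty)
    show "A \<noteq> {}" using I unfolding A_def by blast
  next
    fix C assume "C \<noteq> {}" "subset.chain A C"
    then show "\<Union>C \<in> A"
      using left_ideal_Union_chain[of C] unfolding A_def subset.chain_def by blast
  qed
  then obtain M where M: "left_ideal M" "I \<subseteq> M" "1 \<notin> M" "\<forall>X\<in>A. M \<subseteq> X \<longrightarrow> X = M"
    unfolding A_def by blast
  have "maximal_left_ideal M"
    unfolding maximal_left_ideal_def
    using M left_ideal_one_UNIV unfolding A_def by blast
  then show ?thesis using M(2) by blast
qed

text \<open>The core of a left ideal L: the largest two-sided ideal inside L.  For maximal L
  this is a primitive ideal, and these supply the J-primes needed below.\<close>
definition core :: "'a::ring_1 set \<Rightarrow> 'a set" where
  "core L = {x. \<forall>r. x * r \<in> L}"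

lemma two_sided_ideal_core:
  assumes L: "left_ideal L"
  shows "two_sided_ideal (core L)"
proof (rule two_sided_idealI)
  show "left_ideal (core L)"
    using L unfolding core_def
    by (intro left_idealI) (auto simp: left_ideal_zero left_ideal_add left_ideal_mult
        distrib_right mult.assoc)
next
  fix r x assume "x \<in> core L" then show "x * r \<in> core L"
    unfolding core_def by (simp add: mult.assoc)
qed

lemma core_subset: "core L \<subseteq> L"
proof
  fix x assume "x \<in> core L"
  then have "x * 1 \<in> L" unfolding core_def by blast
  then show "x \<in> L" by simp
qed

lemma two_sided_ideal_subset_core: "two_sided_ideal I \<Longrightarrow> I \<subseteq> L \<Longrightarrow> I \<subseteq> core L"
  unfolding core_def using two_sided_ideal_right by fast

lemma jacobson_subset_core: "maximal_left_ideal L \<Longrightarrow> jacobson \<subseteq> core L"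
  unfolding core_def using jacobson_mult_right by fast

text \<open>The core of a maximal left ideal is prime: if AB \<subseteq> core L and some bs \<notin> L with
  b \<in> B, then every r is a left multiple of bs modulo L, so ar \<in> L for all a \<in> A.\<close>
lemma prime_ideal_core:
  assumes L: "maximal_left_ideal L"
  shows "prime_ideal (core L)"
proof -
  have li: "left_ideal L" using maximal_left_idealD[OF L] by blast
  have "A \<subseteq> core L \<or> B \<subseteq> core L"
    if A: "two_sided_ideal A" and B: "two_sided_ideal B"
      and AB: "\<forall>a\<in>A. \<forall>b\<in>B. a * b \<in> core L" for A B
  proof (cases "B \<subseteq> core L")
    case False
    then obtain b s where bs: "b \<in> B" "b * s \<notin> L" unfolding core_def by blast
    have "a * r \<in> L" if a: "a \<in> A" for a r
    proof -
      obtain y l where yl: "l \<in> L" "r = y * (b * s) + l"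
        using maximal_left_ideal_span[OF L bs(2)] by blast
      have "a * (y * b) \<in> core L" using AB a left_ideal_mult[OF two_sided_ideal_left[OF B] bs(1)] by blast
      then have "a * (y * b) * s + a * l \<in> L"
        unfolding core_def using yl(1) left_ideal_add[OF li] left_ideal_mult[OF li] by blast
      moreover have "a * r = a * (y * b) * s + a * l" using yl(2) by (simp add: algebra_simps)
      ultimately show ?thesis by simp
    qed
    then show ?thesis unfolding core_def by blast
  qed simp
  moreover have "core L \<noteq> UNIV" using core_subset maximal_left_idealD(2)[OF L] by blast
  ultimately show ?thesis
    unfolding prime_ideal_def using two_sided_ideal_core[OF li] by blast
qed

lemma exists_J_prime_above:
  assumes I: "two_sided_ideal I" "I \<noteq> UNIV"
  shows "\<exists>P\<in>J_spec. I \<subseteq> P"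
proof -
  have "1 \<notin> I" using I left_ideal_one_UNIV two_sided_ideal_left by blast
  then obtain L where L: "maximal_left_ideal L" "I \<subseteq> L"
    using exists_maximal_left_ideal two_sided_ideal_left[OF I(1)] by blast
  have "core L \<in> J_spec"
    unfolding J_spec_def using prime_ideal_core[OF L(1)] jacobson_subset_core[OF L(1)] by blast
  then show ?thesis using two_sided_ideal_subset_core[OF I(1) L(2)] by blast
qed

lemma J_spec_two_sided: "P \<in> J_spec \<Longrightarrow> two_sided_ideal P"
  unfolding J_spec_def prime_ideal_def by simp

lemma J_spec_one:
  assumes P: "P \<in> J_spec"
  shows "1 \<notin> P"
proof
  assume "1 \<in> P"
  then have "P = UNIV" using left_ideal_one_UNIV two_sided_ideal_left J_spec_two_sided[OF P] by blast
  then show False using P unfolding J_spec_def prime_ideal_def by simp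
qed

lemma W_elem_iff: "P \<in> W_elem x \<longleftrightarrow> P \<in> J_spec \<and> x \<in> P"
proof -
  have "ideal_gen {x} \<subseteq> P \<longleftrightarrow> x \<in> P" if "P \<in> J_spec"
    using ideal_gen_in ideal_gen_least[OF J_spec_two_sided[OF that]] by blast
  then show ?thesis unfolding W_elem_def W_def by blast
qed

lemma W_elem_subset_iff: "W_elem x \<subseteq> W_elem y \<longleftrightarrow> (\<forall>P\<in>J_spec. x \<in> P \<longrightarrow> y \<in> P)"
  unfolding subset_iff W_elem_iff by blast

lemma W_elem_subset_complement_iff:
  "W_elem y \<subseteq> J_spec - W_elem z \<longleftrightarrow> (\<forall>P\<in>J_spec. y \<in> P \<longrightarrow> z \<notin> P)"
  unfolding subset_iff Diff_iff W_elem_iff by blast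

lemma full_iff_outside_J_spec: "full u \<longleftrightarrow> (\<forall>P\<in>J_spec. u \<notin> P)"
proof
  assume full: "full u"
  show "\<forall>P\<in>J_spec. u \<notin> P"
  proof (intro ballI notI)
    fix P assume P: "P \<in> J_spec" and "u \<in> P"
    then have "ideal_gen {u} \<subseteq> P" using ideal_gen_least J_spec_two_sided by blast
    then show False using full J_spec_one[OF P] unfolding full_def by blast
  qed
next
  assume outside: "\<forall>P\<in>J_spec. u \<notin> P"
  show "full u" unfolding full_def
  proof (rule ccontr)
    assume "ideal_gen {u} \<noteq> UNIV"
    then obtain P where "P \<in> J_spec" "ideal_gen {u} \<subseteq> P"
      using exists_J_prime_above[OF ideal_gen_two_sided] by blast
    then show False using outside ideal_gen_in by blast
  qed
qed

lemma prime_ideal_products: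
  assumes "prime_ideal P" "two_sided_ideal A" "two_sided_ideal B" "\<forall>a\<in>A. \<forall>b\<in>B. a * b \<in> P"
  shows "A \<subseteq> P \<or> B \<subseteq> P"
  using assms unfolding prime_ideal_def by blast

text \<open>Element-wise primeness: if eRf \<subseteq> P for a prime P, then e \<in> P or f \<in> P.  The ideals
  A = core (P : f) = {x. xRf \<subseteq> P} \<ni> e and B = {y. Ay \<subseteq> P} \<ni> f satisfy AB \<subseteq> P.\<close>
lemma prime_ideal_elementwise:
  assumes P: "prime_ideal P" and efP: "\<forall>r. e * r * f \<in> P"
  shows "e \<in> P \<or> f \<in> P"
proof -
  have tsP: "two_sided_ideal P" using P unfolding prime_ideal_def by blast
  have lp: "left_ideal P" using two_sided_ideal_left[OF tsP] .
  define A where "A = core {y. y * f \<in> P}"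
  define B where "B = {y. \<forall>x\<in>A. x * y \<in> P}"
  have tsA: "two_sided_ideal A"
    unfolding A_def using two_sided_ideal_core[OF left_ideal_colon[OF lp]] .
  have tsB: "two_sided_ideal B"
  proof (rule two_sided_idealI)
    show "left_ideal B"
    proof (rule left_idealI)
      show "0 \<in> B" unfolding B_def using left_ideal_zero[OF lp] by simp
    next
      fix y z assume "y \<in> B" "z \<in> B" then show "y + z \<in> B"
        unfolding B_def using left_ideal_add[OF lp] by (simp add: distrib_left)
    next
      fix t y assume y: "y \<in> B"
      have "x * (t * y) \<in> P" if "x \<in> A" for x
      proof -
        have "(x * t) * y \<in> P" using y two_sided_ideal_right[OF tsA that] unfolding B_def by blast
        then show ?thesis by (simp add: mult.assoc)
      qed
      then show "t * y \<in> B" unfolding B_def by blast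
    qed
  next
    fix t y assume y: "y \<in> B"
    have "x * (y * t) \<in> P" if "x \<in> A" for x
    proof -
      have "(x * y) * t \<in> P" using y that two_sided_ideal_right[OF tsP] unfolding B_def by blast
      then show ?thesis by (simp add: mult.assoc)
    qed
    then show "y * t \<in> B" unfolding B_def by blast
  qed
  have "e \<in> A" using efP unfolding A_def core_def by simp
  moreover have "f \<in> B"
  proof -
    have "x * f \<in> P" if "x \<in> A" for x
      using core_subset that unfolding A_def by blast
    then show ?thesis unfolding B_def by blast
  qed
  moreover have "\<forall>a\<in>A. \<forall>b\<in>B. a * b \<in> P" unfolding B_def by blast
  then have "A \<subseteq> P \<or> B \<subseteq> P" using prime_ideal_products[OF P tsA tsB] by blast
  ultimately show ?thesis by blast
qed

lemma J_spec_idempotent_split: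
  assumes "P \<in> J_spec" and "\<forall>r. e * r * (1 - e) \<in> jacobson"
  shows "e \<in> P \<or> 1 - e \<in> P"
  using assms prime_ideal_elementwise unfolding J_spec_def by blast

text \<open>Fact (2): for such e, whether a J-prime avoids a - e is decided by the pointwise
  W-conditions (split on which of e, 1 - e lies in P).\<close>
lemma J_spec_diff_iff:
  assumes P: "P \<in> J_spec" and e: "\<forall>r. e * r * (1 - e) \<in> jacobson"
  shows "a - e \<notin> P \<longleftrightarrow> (a - 1 \<in> P \<longrightarrow> e \<in> P) \<and> (e \<in> P \<longrightarrow> a \<notin> P)"
proof -
  have lp: "left_ideal P" using two_sided_ideal_left[OF J_spec_two_sided[OF P]] .
  show ?thesis
  proof (cases "e \<in> P")
    case True
    have "a - e \<in> P \<longleftrightarrow> a \<in> P"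
      using True left_ideal_diff[OF lp, of a e] left_ideal_add[OF lp, of "a - e" e] by auto
    then show ?thesis using True by blast
  next
    case False
    then have "1 - e \<in> P" using J_spec_idempotent_split[OF P e] by blast
    moreover have "a - e = (a - 1) + (1 - e)" "a - 1 = (a - e) - (1 - e)" by simp_all
    ultimately have "a - e \<in> P \<longleftrightarrow> a - 1 \<in> P"
      using left_ideal_add[OF lp] left_ideal_diff[OF lp] by metis
    then show ?thesis using False by blast
  qed
qed

theorem lemma3p1:
  fixes a :: "'a::ring_1"
  shows "feckly_clean a \<longleftrightarrow>
    (\<exists>e :: 'a. W_elem (a - 1) \<subseteq> W_elem e \<and> W_elem e \<subseteq> J_spec - W_elem a
        \<and> (\<forall>r. e * r * (1 - e) \<in> jacobson))"
proof -
  have decompose: "a = e + u \<longleftrightarrow> u = a - e" for e u :: 'a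
    by (auto simp: algebra_simps)
  have W_condition: "W_elem (a - 1) \<subseteq> W_elem e \<and> W_elem e \<subseteq> J_spec - W_elem a \<longleftrightarrow> full (a - e)"
    if e: "\<forall>r. e * r * (1 - e) \<in> jacobson" for e
  proof -
    have "W_elem (a - 1) \<subseteq> W_elem e \<and> W_elem e \<subseteq> J_spec - W_elem a \<longleftrightarrow>
        (\<forall>P\<in>J_spec. (a - 1 \<in> P \<longrightarrow> e \<in> P) \<and> (e \<in> P \<longrightarrow> a \<notin> P))"
      by (simp add: W_elem_subset_iff W_elem_subset_complement_iff ball_conj_distrib)
    also have "\<dots> \<longleftrightarrow> (\<forall>P\<in>J_spec. a - e \<notin> P)"
      by (simp add: J_spec_diff_iff[OF _ e])
    also have "\<dots> \<longleftrightarrow> full (a - e)"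
      by (simp add: full_iff_outside_J_spec)
    finally show ?thesis .
  qed
  have "feckly_clean a \<longleftrightarrow> (\<exists>e. full (a - e) \<and> (\<forall>r. e * r * (1 - e) \<in> jacobson))"
    unfolding feckly_clean_def decompose by blast
  then show ?thesis using W_condition by blast
qed

end
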